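(* Let $H$ be a complex Hilbert space, $\alpha$ a state on $H$ and $A$ an observable on $H$ with outcome space $(\Omega_A,\mathcal{F}_A)$. Let $\mathcal{I}=\mathcal{H}_{(\alpha,A)}$ be the Holevo instrument $\mathcal{H}_{(\alpha,A)}(\Delta)(\rho)=\mathrm{tr}[\rho A(\Delta)]\alpha$. Then $\mathcal{U}_\mathcal{I}=\{\mathcal{I}_a^*\colon a\in\mathcal{E}(H)\}$ is a $Sob$ effect algebra.
   Context: $\mathcal{E}(H)$ is the set of effects ($0\le a\le I$); states are effects of trace one. A sub-observable with outcome space $(\Omega,\mathcal{F})$ is a map $\mathcal{F}\to\mathcal{E}(H)$ countably additive in the strong operator topology; it is an observable if its value at $\Omega$ is $I$; $Sob(H)$ is the set of sub-observables, with pointwise sums and differences. For an instrument $\mathcal{I}$ (operation-valued measure with $\mathcal{I}(\Omega_\mathcal{I})$ trace preserving), the dual $\mathcal{I}^*(\Delta)$ is defined by $\mathrm{tr}[\rho\,\mathcal{I}^*(\Delta)(B)]=\mathrm{tr}[\mathcal{I}(\Delta)(\rho)B]$ for all states $\rho$ and bounded $B$, and $\mathcal{I}_a^*(\Delta)=\mathcal{I}^*(\Delta)(a)$ (for the Holevo instrument, $\mathcal{I}_a^*(\Delta)=\mathrm{tr}(\alpha a)A(\Delta)$). A subset $\mathcal{U}\subseteq Sob(H)$ all of whose elements have the same outcome space is a $Sob$ effect algebra if: (S1) there is an observable $Z\in\mathcal{U}$; (S2) $A\in\mathcal{U}$ implies $Z-A\in\mathcal{U}$; (S3) $A,B\in\mathcal{U}$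 and $A+B\in Sob(H)$ imply $A+B\in\mathcal{U}$. *)

theory Defs
  imports "HOL-Analysis.Analysis"
begin

text \<open>The complex Hilbert space H is modelled as l2(I) for an arbitrary index type 'i
  (every complex Hilbert space is unitarily isomorphic to some l2(I)).
  Operators are maps on such functions, extensional: they vanish outside l2.\<close>

type_synonym 'i vec = "'i \<Rightarrow> complex"
type_synonym 'i op = "'i vec \<Rightarrow> 'i vec"

definition l2 :: "'i vec set" where
  "l2 = {x. (\<lambda>i. (cmod (x i))\<^sup>2) summable_on UNIV}"

definition l2inner :: "'i vec \<Rightarrow> 'i vec \<Rightarrow> complex" where
  "l2inner x y = (\<Sum>\<^sub>\<infinity>i. cnj (x i) * y i)"

definition l2norm :: "'i vec \<Rightarrow> real" where
  "l2norm x = sqrt (\<Sum>\<^sub>\<infinity>i. (cmod (x i))\<^sup>2)"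

definition zero_vec :: "'i vec" where
  "zero_vec = (\<lambda>i. 0)"

definition zero_op :: "'i op" where
  "zero_op = (\<lambda>x. zero_vec)"

definition id_op :: "'i op" where
  "id_op = (\<lambda>x. if x \<in> l2 then x else zero_vec)"

definition bounded_op :: "'i op \<Rightarrow> bool" where
  "bounded_op T \<longleftrightarrow>
     (\<forall>x\<in>l2. T x \<in> l2) \<and>
     (\<forall>x\<in>l2. \<forall>y\<in>l2. \<forall>c. T (\<lambda>i. c * x i + y i) = (\<lambda>i. c * T x i + T y i)) \<and>
     (\<exists>C. \<forall>x\<in>l2. l2norm (T x) \<le> C * l2norm x) \<and>
     (\<forall>x. x \<notin> l2 \<longrightarrow> T x = zero_vec)"

definition positive_op :: "'i op \<Rightarrow> bool" where
  "positive_op T \<longleftrightarrow> bounded_op T \<and>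
     (\<forall>x\<in>l2. Im (l2inner x (T x)) = 0 \<and> 0 \<le> Re (l2inner x (T x)))"

definition effect :: "'i op \<Rightarrow> bool" where
  "effect a \<longleftrightarrow> positive_op a \<and> positive_op (\<lambda>x i. id_op x i - a x i)"

definition basis_vec :: "'i \<Rightarrow> 'i vec" where
  "basis_vec j = (\<lambda>i. if i = j then 1 else 0)"

definition trace_op :: "'i op \<Rightarrow> complex" where
  "trace_op T = (\<Sum>\<^sub>\<infinity>j. l2inner (basis_vec j) (T (basis_vec j)))"

text \<open>States: effects that are trace class (for positive operators: summable diagonal)
  with trace one.\<close>
definition state :: "'i op \<Rightarrow> bool" where
  "state \<rho> \<longleftrightarrow> effect \<rho> \<and>
     (\<lambda>j. l2inner (basis_vec j) (\<rho> (basis_vec j))) summable_on UNIV \<and>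
     trace_op \<rho> = 1"

text \<open>Sub-observables with outcome space (space M, sets M); values outside sets M
  are fixed to 0 (representation convention). Countable additivity in the strong
  operator topology.\<close>
definition subobs :: "'w measure \<Rightarrow> ('w set \<Rightarrow> 'i op) \<Rightarrow> bool" where
  "subobs M A \<longleftrightarrow>
     (\<forall>\<Delta>. \<Delta> \<notin> sets M \<longrightarrow> A \<Delta> = zero_op) \<and>
     (\<forall>\<Delta>\<in>sets M. effect (A \<Delta>)) \<and>
     (\<forall>D :: nat \<Rightarrow> 'w set. range D \<subseteq> sets M \<longrightarrow> disjoint_family D \<longrightarrow>
        (\<forall>x\<in>l2. (\<lambda>N. l2norm (\<lambda>i. (\<Sum>n<N. A (D n) x i) - A (\<Union>n. D n) x i))
                   \<longlonglongrightarrow> 0))"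

definition observable :: "'w measure \<Rightarrow> ('w set \<Rightarrow> 'i op) \<Rightarrow> bool" where
  "observable M A \<longleftrightarrow> subobs M A \<and> A (space M) = id_op"

definition sob_add :: "('w set \<Rightarrow> 'i op) \<Rightarrow> ('w set \<Rightarrow> 'i op) \<Rightarrow> ('w set \<Rightarrow> 'i op)" where
  "sob_add A B = (\<lambda>\<Delta> x i. A \<Delta> x i + B \<Delta> x i)"

definition sob_diff :: "('w set \<Rightarrow> 'i op) \<Rightarrow> ('w set \<Rightarrow> 'i op) \<Rightarrow> ('w set \<Rightarrow> 'i op)" where
  "sob_diff A B = (\<lambda>\<Delta> x i. A \<Delta> x i - B \<Delta> x i)"

definition sob_effect_algebra :: "'w measure \<Rightarrow> ('w set \<Rightarrow> 'i op) set \<Rightarrow> bool" where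
  "sob_effect_algebra M U \<longleftrightarrow>
     U \<subseteq> {A. subobs M A} \<and>
     (\<exists>Z\<in>U. observable M Z \<and> (\<forall>A\<in>U. sob_diff Z A \<in> U)) \<and>
     (\<forall>A\<in>U. \<forall>B\<in>U. subobs M (sob_add A B) \<longrightarrow> sob_add A B \<in> U)"

definition holevo :: "'i op \<Rightarrow> ('w set \<Rightarrow> 'i op) \<Rightarrow> 'w set \<Rightarrow> 'i op \<Rightarrow> 'i op" where
  "holevo \<alpha> A \<Delta> \<rho> = (\<lambda>x i. trace_op (\<rho> \<circ> A \<Delta>) * \<alpha> x i)"

definition dual_inst :: "('w set \<Rightarrow> 'i op \<Rightarrow> 'i op) \<Rightarrow> 'w set \<Rightarrow> 'i op \<Rightarrow> 'i op" where
  "dual_inst I \<Delta> B = (THE X. bounded_op X \<and>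
      (\<forall>\<rho>. state \<rho> \<longrightarrow> trace_op (\<rho> \<circ> X) = trace_op (I \<Delta> \<rho> \<circ> B)))"

definition U_inst :: "('w set \<Rightarrow> 'i op \<Rightarrow> 'i op) \<Rightarrow> ('w set \<Rightarrow> 'i op) set" where
  "U_inst I = {(\<lambda>\<Delta>. dual_inst I \<Delta> a) | a. effect a}"

end

theory Submission
  imports Defs
begin

text \<open>
  The dual of the Holevo instrument is I_a^*(\<Delta>) = tr(\<alpha> a) A(\<Delta>): this operator satisfies the
  defining trace identity, and a bounded operator is determined by its traces against states,
  because the rank-one states v v^* with finitely supported unit vectors v recover all its
  matrix entries by polarization, and boundedness extends equality from finitely supported
  vectors to all of l2.

  Without a spectral theorem, tr(\<alpha> a) \<in> [0,1] comes from an infinite pivoted Cholesky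
  decomposition \<alpha> = \<Sum>_m v_m v_m^* of the positive matrix of the state, with
  \<Sum>_m \<parallel>v_m\<parallel>^2 \<le> tr \<alpha> = 1: then tr(\<alpha> a) = \<Sum>_m \<langle>v_m, a v_m\<rangle> and
  0 \<le> \<langle>v_m, a v_m\<rangle> \<le> \<parallel>v_m\<parallel>^2. Every value in [0,1] is attained by a = r I, so the set in
  question is {r A | 0 \<le> r \<le> 1}. It is a Sob effect algebra: A - r A = (1 - r) A, and r A + s A
  is a sub-observable only if (r + s) I = (r + s) A(\<Omega>) is an effect, i.e. r + s \<le> 1.
\<close>

section \<open>The sequence space l2\<close>

lemma mem_l2_iff: "x \<in> l2 \<longleftrightarrow> (\<lambda>i. (cmod (x i))\<^sup>2) summable_on UNIV"
  by (simp add: l2_def)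

lemma zero_in_l2 [simp]: "(\<lambda>i. 0) \<in> l2"
  by (simp add: l2_def)

lemma zero_vec_in_l2 [simp]: "zero_vec \<in> l2"
  by (simp add: zero_vec_def)

lemma finite_support_in_l2:
  assumes "finite S" "\<And>i. i \<notin> S \<Longrightarrow> x i = 0"
  shows "x \<in> l2"
  unfolding mem_l2_iff
  by (rule finite_nonzero_values_imp_summable_on, rule finite_subset[OF _ assms(1)]) (use assms(2) in auto)

lemma basis_vec_in_l2 [simp]: "basis_vec j \<in> l2"
  by (rule finite_support_in_l2[of "{j}"]) (auto simp: basis_vec_def)

lemma l2_lincomb:
  assumes "x \<in> l2" "y \<in> l2"
  shows "(\<lambda>i. c * x i + y i) \<in> l2"
proof -
  have s: "(\<lambda>i. 2 * (cmod c)\<^sup>2 * (cmod (x i))\<^sup>2 + 2 * (cmod (y i))\<^sup>2) summable_on UNIV"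
    using assms unfolding mem_l2_iff
    by (intro summable_on_add summable_on_cmult_right) auto
  show ?thesis unfolding mem_l2_iff
  proof (rule summable_on_comparison_test[OF s])
    fix i
    have "cmod (c * x i + y i) \<le> cmod c * cmod (x i) + cmod (y i)"
      by (metis norm_mult norm_triangle_ineq)
    moreover have "(cmod c * cmod (x i) + cmod (y i))\<^sup>2 \<le> 2 * (cmod c)\<^sup>2 * (cmod (x i))\<^sup>2 + 2 * (cmod (y i))\<^sup>2"
      using sum_squares_bound[of "cmod c * cmod (x i)" "cmod (y i)"]
      by (simp add: power2_eq_square algebra_simps)
    ultimately show "(cmod (c * x i + y i))\<^sup>2 \<le> 2 * (cmod c)\<^sup>2 * (cmod (x i))\<^sup>2 + 2 * (cmod (y i))\<^sup>2"
      by (meson norm_ge_zero power_mono order_trans)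
  qed auto
qed

lemma l2_scale: "x \<in> l2 \<Longrightarrow> (\<lambda>i. c * x i) \<in> l2"
  using l2_lincomb[OF _ zero_vec_in_l2, of x c] by (simp add: zero_vec_def)

lemma l2_add: "x \<in> l2 \<Longrightarrow> y \<in> l2 \<Longrightarrow> (\<lambda>i. x i + y i) \<in> l2"
  using l2_lincomb[of x y 1] by simp

lemma l2_diff: "x \<in> l2 \<Longrightarrow> y \<in> l2 \<Longrightarrow> (\<lambda>i. x i - y i) \<in> l2"
  using l2_lincomb[of y x "-1"] by simp

lemma l2inner_abs_summable:
  assumes "x \<in> l2" "y \<in> l2"
  shows "(\<lambda>i. cmod (x i) * cmod (y i)) summable_on UNIV"
proof (rule summable_on_comparison_test)
  show "(\<lambda>i. (cmod (x i))\<^sup>2 + (cmod (y i))\<^sup>2) summable_on UNIV"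
    using assms unfolding mem_l2_iff by (intro summable_on_add) auto
  fix i
  have "0 \<le> cmod (x i) * cmod (y i)" by simp
  moreover have "2 * (cmod (x i) * cmod (y i)) \<le> (cmod (x i))\<^sup>2 + (cmod (y i))\<^sup>2"
    using sum_squares_bound[of "cmod (x i)" "cmod (y i)"] by (simp add: mult.assoc)
  ultimately show "cmod (x i) * cmod (y i) \<le> (cmod (x i))\<^sup>2 + (cmod (y i))\<^sup>2"
    by linarith
qed simp

lemma l2inner_summable:
  assumes "x \<in> l2" "y \<in> l2"
  shows "(\<lambda>i. cnj (x i) * y i) summable_on UNIV"
proof -
  have "(\<lambda>i. norm (cnj (x i) * y i)) summable_on UNIV"
    using l2inner_abs_summable[OF assms] by (simp add: norm_mult)
  then show ?thesis using summable_on_iff_abs_summable_on_complex by blast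
qed

lemma l2inner_commute: "l2inner y x = cnj (l2inner x y)"
proof -
  have "cnj (\<Sum>\<^sub>\<infinity>i. cnj (x i) * y i) = (\<Sum>\<^sub>\<infinity>i. cnj (cnj (x i) * y i))"
    by (rule infsum_cnj[symmetric])
  then show ?thesis unfolding l2inner_def by (simp add: mult.commute)
qed

lemma l2inner_lincomb_right:
  assumes "x \<in> l2" "y \<in> l2" "z \<in> l2"
  shows "l2inner x (\<lambda>i. c * y i + z i) = c * l2inner x y + l2inner x z"
proof -
  have "l2inner x (\<lambda>i. c * y i + z i) = (\<Sum>\<^sub>\<infinity>i. c * (cnj (x i) * y i) + cnj (x i) * z i)"
    unfolding l2inner_def by (simp add: algebra_simps)
  also have "\<dots> = (\<Sum>\<^sub>\<infinity>i. c * (cnj (x i) * y i)) + (\<Sum>\<^sub>\<infinity>i. cnj (x i) * z i)"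
    using assms by (intro infsum_add summable_on_cmult_right l2inner_summable) auto
  also have "\<dots> = c * l2inner x y + l2inner x z"
    unfolding l2inner_def by (simp add: infsum_cmult_right')
  finally show ?thesis .
qed

lemma l2inner_lincomb_left:
  assumes "x \<in> l2" "y \<in> l2" "z \<in> l2"
  shows "l2inner (\<lambda>i. c * y i + z i) x = cnj c * l2inner y x + l2inner z x"
  using l2inner_lincomb_right[OF assms, of c] by (metis l2inner_commute complex_cnj_add complex_cnj_mult)

lemma l2inner_scale_right: "l2inner x (\<lambda>i. c * y i) = c * l2inner x y"
  unfolding l2inner_def by (simp add: infsum_cmult_right' algebra_simps)

lemma l2inner_scale_left: "l2inner (\<lambda>i. c * x i) y = cnj c * l2inner x y"
  unfolding l2inner_def by (simp add: infsum_cmult_right' algebra_simps)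

lemma l2inner_finite_support:
  assumes "finite S" "\<And>i. i \<notin> S \<Longrightarrow> v i = 0"
  shows "l2inner v y = (\<Sum>i\<in>S. cnj (v i) * y i)"
proof -
  have "l2inner v y = (\<Sum>\<^sub>\<infinity>i\<in>S. cnj (v i) * y i)"
    unfolding l2inner_def by (rule infsum_cong_neutral) (use assms in auto)
  then show ?thesis using assms by simp
qed

lemma l2inner_basis_vec_left [simp]: "l2inner (basis_vec j) y = y j"
  by (subst l2inner_finite_support[of "{j}"]) (auto simp: basis_vec_def)

lemma l2inner_basis_vec_right [simp]: "l2inner y (basis_vec j) = cnj (y j)"
  by (metis l2inner_basis_vec_left l2inner_commute)

lemma infsum_of_real: "(\<Sum>\<^sub>\<infinity>i\<in>A. (of_real (f i) :: complex)) = of_real (\<Sum>\<^sub>\<infinity>i\<in>A. f i)"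
  by (rule infsum_bounded_linear_strong[OF summable_on_bounded_linear_iff bounded_linear_of_real])
    (auto intro: bounded_linear_of_real bounded_linear_Re)

lemma l2norm_nonneg [simp]: "0 \<le> l2norm x"
  unfolding l2norm_def by (simp add: infsum_nonneg)

lemma l2norm_square: "(l2norm x)\<^sup>2 = (\<Sum>\<^sub>\<infinity>i. (cmod (x i))\<^sup>2)"
  unfolding l2norm_def by (simp add: infsum_nonneg)

lemma l2inner_self: "l2inner x x = of_real ((l2norm x)\<^sup>2)"
proof -
  have pt: "\<And>z. cnj z * z = of_real ((cmod z)\<^sup>2)"
    by (metis complex_norm_square mult.commute)
  show ?thesis
    unfolding l2inner_def pt infsum_of_real l2norm_square ..
qed

lemma norm_le_l2norm:
  assumes "x \<in> l2" shows "cmod (x k) \<le> l2norm x"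
proof -
  have "(\<Sum>i\<in>{k}. (cmod (x i))\<^sup>2) \<le> (\<Sum>\<^sub>\<infinity>i. (cmod (x i))\<^sup>2)"
    using assms unfolding mem_l2_iff by (intro finite_sum_le_infsum) auto
  then have "(cmod (x k))\<^sup>2 \<le> (l2norm x)\<^sup>2" by (simp add: l2norm_square)
  then show ?thesis by (simp add: abs_le_square_iff[symmetric])
qed

lemma l2norm_scale: "l2norm (\<lambda>i. c * x i) = cmod c * l2norm x"
proof -
  have "(\<Sum>\<^sub>\<infinity>i. (cmod (c * x i))\<^sup>2) = (cmod c)\<^sup>2 * (\<Sum>\<^sub>\<infinity>i. (cmod (x i))\<^sup>2)"
    by (simp add: norm_mult power_mult_distrib infsum_cmult_right')
  then show ?thesis unfolding l2norm_def by (simp add: real_sqrt_mult)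
qed

lemma infsum_norm_mult_le_l2norm:
  assumes "x \<in> l2" "y \<in> l2"
  shows "(\<Sum>\<^sub>\<infinity>i. cmod (x i) * cmod (y i)) \<le> l2norm x * l2norm y"
proof (rule infsum_le_finite_sums[OF l2inner_abs_summable[OF assms]])
  fix F :: "'a set" assume F: "finite F"
  have "(\<Sum>i\<in>F. cmod (x i) * cmod (y i)) \<le> L2_set (\<lambda>i. cmod (x i)) F * L2_set (\<lambda>i. cmod (y i)) F"
    using L2_set_mult_ineq[of "\<lambda>i. cmod (x i)" "\<lambda>i. cmod (y i)" F] by simp
  also have "\<dots> \<le> l2norm x * l2norm y"
  proof (rule mult_mono)
    show "L2_set (\<lambda>i. cmod (x i)) F \<le> l2norm x"
      unfolding L2_set_def l2norm_def using assms(1) F unfolding mem_l2_iff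
      by (intro real_sqrt_le_mono finite_sum_le_infsum) auto
    show "L2_set (\<lambda>i. cmod (y i)) F \<le> l2norm y"
      unfolding L2_set_def l2norm_def using assms(2) F unfolding mem_l2_iff
      by (intro real_sqrt_le_mono finite_sum_le_infsum) auto
  qed (auto simp: L2_set_def intro: sum_nonneg)
  finally show "(\<Sum>i\<in>F. cmod (x i) * cmod (y i)) \<le> l2norm x * l2norm y" .
qed

lemma l2_Cauchy_Schwarz:
  assumes "x \<in> l2" "y \<in> l2"
  shows "cmod (l2inner x y) \<le> l2norm x * l2norm y"
proof -
  have "cmod (l2inner x y) \<le> (\<Sum>\<^sub>\<infinity>i. cmod (x i) * cmod (y i))"
    unfolding l2inner_def using norm_infsum_bound[of "\<lambda>i. cnj (x i) * y i" UNIV]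
      l2inner_abs_summable[OF assms] by (simp add: norm_mult)
  also have "\<dots> \<le> l2norm x * l2norm y" by (rule infsum_norm_mult_le_l2norm[OF assms])
  finally show ?thesis .
qed

lemma l2norm_triangle:
  assumes "x \<in> l2" "y \<in> l2"
  shows "l2norm (\<lambda>i. x i + y i) \<le> l2norm x + l2norm y"
proof -
  have xy: "(\<lambda>i. x i + y i) \<in> l2" using l2_add[OF assms] .
  have left: "l2inner (\<lambda>i. x i + y i) z = l2inner x z + l2inner y z" if "z \<in> l2" for z
    using l2inner_lincomb_left[OF that assms, of 1] by simp
  have right: "l2inner z (\<lambda>i. x i + y i) = l2inner z x + l2inner z y" if "z \<in> l2" for z
    using l2inner_lincomb_right[OF that assms, of 1] by simp
  have "l2inner (\<lambda>i. x i + y i) (\<lambda>i. x i + y i)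
        = l2inner x x + l2inner x y + (l2inner y x + l2inner y y)"
    unfolding left[OF xy] right[OF assms(1)] right[OF assms(2)] ..
  then have "of_real ((l2norm (\<lambda>i. x i + y i))\<^sup>2)
      = of_real ((l2norm x)\<^sup>2) + l2inner x y + (cnj (l2inner x y) + of_real ((l2norm y)\<^sup>2))"
    by (simp add: l2inner_self l2inner_commute[of y x])
  then have "(l2norm (\<lambda>i. x i + y i))\<^sup>2 = (l2norm x)\<^sup>2 + 2 * Re (l2inner x y) + (l2norm y)\<^sup>2"
    by (metis Re_complex_of_real complex_add_cnj plus_complex.sel(1) add.assoc mult_2)
  also have "\<dots> \<le> (l2norm x)\<^sup>2 + 2 * (l2norm x * l2norm y) + (l2norm y)\<^sup>2"
    using l2_Cauchy_Schwarz[OF assms] complex_Re_le_cmod[of "l2inner x y"] by linarith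
  also have "\<dots> = (l2norm x + l2norm y)\<^sup>2" by (simp add: power2_eq_square algebra_simps)
  finally show ?thesis
    by (meson l2norm_nonneg add_nonneg_nonneg power2_le_imp_le)
qed

section \<open>Bounded operators\<close>

lemma bounded_op_in_l2: "bounded_op T \<Longrightarrow> x \<in> l2 \<Longrightarrow> T x \<in> l2"
  unfolding bounded_op_def by blast

lemma bounded_op_lincomb: "bounded_op T \<Longrightarrow> x \<in> l2 \<Longrightarrow> y \<in> l2 \<Longrightarrow>
    T (\<lambda>i. c * x i + y i) = (\<lambda>i. c * T x i + T y i)"
  unfolding bounded_op_def by blast

lemma bounded_op_outside_l2: "bounded_op T \<Longrightarrow> x \<notin> l2 \<Longrightarrow> T x = zero_vec"
  unfolding bounded_op_def by blast

lemma bounded_op_zero_vec: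
  assumes "bounded_op T" shows "T zero_vec = zero_vec"
proof -
  have "T zero_vec = (\<lambda>i. 1 * T zero_vec i + T zero_vec i)"
    using bounded_op_lincomb[OF assms zero_vec_in_l2 zero_vec_in_l2, of 1]
    by (simp add: zero_vec_def)
  then have "\<And>i. T zero_vec i = 0" by (metis add_cancel_left_left mult_1)
  then show ?thesis by (auto simp: zero_vec_def)
qed

lemma bounded_op_scale:
  assumes "bounded_op T" "x \<in> l2" shows "T (\<lambda>i. c * x i) = (\<lambda>i. c * T x i)"
  using bounded_op_lincomb[OF assms zero_vec_in_l2, of c] bounded_op_zero_vec[OF assms(1)]
  by (simp add: zero_vec_def)

lemma bounded_op_diff:
  assumes "bounded_op T" "x \<in> l2" "y \<in> l2" shows "T (\<lambda>i. x i - y i) = (\<lambda>i. T x i - T y i)"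
  using bounded_op_lincomb[OF assms(1,3,2), of "-1"] by simp

lemma bounded_op_sum:
  assumes "bounded_op T" "finite F" "\<And>k. k \<in> F \<Longrightarrow> u k \<in> l2"
  shows "(\<lambda>i. \<Sum>k\<in>F. c k * u k i) \<in> l2 \<and> T (\<lambda>i. \<Sum>k\<in>F. c k * u k i) = (\<lambda>i. \<Sum>k\<in>F. c k * T (u k) i)"
  using assms(2,3)
proof (induction F rule: finite_induct)
  case empty
  then show ?case using bounded_op_zero_vec[OF assms(1)] by (simp add: zero_vec_def)
next
  case (insert a F)
  then have IH: "(\<lambda>i. \<Sum>k\<in>F. c k * u k i) \<in> l2"
      "T (\<lambda>i. \<Sum>k\<in>F. c k * u k i) = (\<lambda>i. \<Sum>k\<in>F. c k * T (u k) i)" and ua: "u a \<in> l2"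
    by auto
  then show ?case
    using insert(1,2) l2_lincomb[OF ua IH(1)] bounded_op_lincomb[OF assms(1) ua IH(1), of "c a"]
    by simp
qed

lemma bounded_opE:
  assumes "bounded_op T"
  obtains C where "C \<ge> 0" "\<And>x. x \<in> l2 \<Longrightarrow> l2norm (T x) \<le> C * l2norm x"
proof -
  obtain C where C: "\<forall>x\<in>l2. l2norm (T x) \<le> C * l2norm x"
    using assms unfolding bounded_op_def by blast
  have "l2norm (T x) \<le> max C 0 * l2norm x" if "x \<in> l2" for x
    using C that by (meson l2norm_nonneg max.cobounded1 mult_right_mono order_trans)
  then show ?thesis using that[of "max C 0"] by auto
qed

lemma bounded_op_zero_op: "bounded_op zero_op"
  unfolding bounded_op_def zero_op_def
  by (auto simp: zero_vec_def l2norm_def intro!: exI[of _ 0])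

lemma bounded_op_id_op: "bounded_op id_op"
  unfolding bounded_op_def
proof (intro conjI ballI allI impI)
  show "\<exists>C. \<forall>x\<in>l2. l2norm (id_op x) \<le> C * l2norm x"
    by (rule exI[of _ 1]) (simp add: id_op_def)
qed (auto simp: id_op_def l2_lincomb)

lemma bounded_op_scale_op:
  assumes "bounded_op T" shows "bounded_op (\<lambda>x i. c * T x i)"
proof -
  obtain C where C: "C \<ge> 0" "\<And>x. x \<in> l2 \<Longrightarrow> l2norm (T x) \<le> C * l2norm x"
    using bounded_opE[OF assms] by blast
  have "l2norm (\<lambda>i. c * T x i) \<le> (cmod c * C) * l2norm x" if "x \<in> l2" for x
    using mult_left_mono[OF C(2)[OF that], of "cmod c"] by (simp add: l2norm_scale mult.assoc)
  moreover have "(\<lambda>i. c * T (\<lambda>i. d * x i + y i) i) = (\<lambda>i. d * (c * T x i) + c * T y i)"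
    if "x \<in> l2" "y \<in> l2" for x y d
    using bounded_op_lincomb[OF assms that] by (simp add: algebra_simps)
  ultimately show ?thesis
    using assms unfolding bounded_op_def by (auto simp: l2_scale zero_vec_def)
qed

lemma bounded_op_diff_op:
  assumes "bounded_op S" "bounded_op T" shows "bounded_op (\<lambda>x i. S x i - T x i)"
proof -
  obtain C where C: "\<And>x. x \<in> l2 \<Longrightarrow> l2norm (S x) \<le> C * l2norm x"
    using bounded_opE[OF assms(1)] by blast
  obtain D where D: "\<And>x. x \<in> l2 \<Longrightarrow> l2norm (T x) \<le> D * l2norm x"
    using bounded_opE[OF assms(2)] by blast
  have "l2norm (\<lambda>i. S x i - T x i) \<le> (C + D) * l2norm x" if x: "x \<in> l2" for x
  proof -
    have "l2norm (\<lambda>i. S x i + (-1) * T x i) \<le> l2norm (S x) + l2norm (\<lambda>i. (-1) * T x i)"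
      using x bounded_op_in_l2[OF assms(1) x] bounded_op_in_l2[OF assms(2) x]
      by (intro l2norm_triangle l2_scale)
    also have "\<dots> \<le> C * l2norm x + D * l2norm x"
      using C[OF x] D[OF x] l2norm_scale[of "-1" "T x"] by simp
    finally show ?thesis by (simp add: algebra_simps)
  qed
  moreover have "(\<lambda>i. S (\<lambda>i. d * x i + y i) i - T (\<lambda>i. d * x i + y i) i)
      = (\<lambda>i. d * (S x i - T x i) + (S y i - T y i))" if "x \<in> l2" "y \<in> l2" for x y d
    using bounded_op_lincomb[OF assms(1) that] bounded_op_lincomb[OF assms(2) that]
    by (simp add: algebra_simps)
  ultimately show ?thesis
    using assms unfolding bounded_op_def by (auto simp: l2_diff zero_vec_def)
qed

section \<open>Positive operators and effects\<close>

lemma sesquilinear_eq_0_if_diagonal_eq_0: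
  fixes B :: "'i vec \<Rightarrow> 'i vec \<Rightarrow> complex" and V :: "'i vec set"
  assumes closed: "\<And>c u z. u \<in> V \<Longrightarrow> z \<in> V \<Longrightarrow> (\<lambda>i. c * u i + z i) \<in> V"
    and right: "\<And>u x z c. u \<in> V \<Longrightarrow> x \<in> V \<Longrightarrow> z \<in> V \<Longrightarrow> B u (\<lambda>i. c * x i + z i) = c * B u x + B u z"
    and left: "\<And>u x z c. u \<in> V \<Longrightarrow> x \<in> V \<Longrightarrow> z \<in> V \<Longrightarrow> B (\<lambda>i. c * u i + z i) x = cnj c * B u x + B z x"
    and diagonal: "\<And>y. y \<in> V \<Longrightarrow> B y y = 0"
    and w: "w \<in> V" and x: "x \<in> V"
  shows "B w x = 0"
proof -
  define p where "p = (\<lambda>i. 1 * w i + x i)"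
  define q where "q = (\<lambda>i. \<i> * x i + w i)"
  have "p \<in> V" "q \<in> V" unfolding p_def q_def using closed[OF w x] closed[OF x w] by blast+
  have "B p p = B w w + B w x + B x w + B x x"
    using left[OF w \<open>p \<in> V\<close> x, of 1] right[OF w w x, of 1] right[OF x w x, of 1]
    unfolding p_def[symmetric] by simp
  then have sym: "B w x + B x w = 0" using diagonal w x \<open>p \<in> V\<close> by simp
  have "B q q = cnj \<i> * (\<i> * B x x + B x w) + (\<i> * B w x + B w w)"
    using left[OF x \<open>q \<in> V\<close> w, of \<i>] right[OF x x w, of \<i>] right[OF w x w, of \<i>]
    unfolding q_def[symmetric] by simp
  then have "\<i> * B w x - \<i> * B x w = 0"
    using diagonal w x \<open>q \<in> V\<close> by (simp add: algebra_simps)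
  then have "B w x = B x w" by (simp add: right_diff_distrib[symmetric])
  then show ?thesis using sym by simp
qed

lemma positive_op_bounded: "positive_op T \<Longrightarrow> bounded_op T"
  unfolding positive_op_def by blast

lemma positive_opD:
  "positive_op T \<Longrightarrow> x \<in> l2 \<Longrightarrow> Im (l2inner x (T x)) = 0 \<and> 0 \<le> Re (l2inner x (T x))"
  unfolding positive_op_def by blast

lemma positive_op_selfadjoint:
  assumes T: "positive_op T" and w: "w \<in> l2" and x: "x \<in> l2"
  shows "l2inner w (T x) = l2inner (T w) x"
proof -
  have bT: "bounded_op T" using positive_op_bounded[OF T] .
  define B where "B = (\<lambda>u y. l2inner u (T y) - l2inner (T u) y)"
  have "B w x = 0"
  proof (rule sesquilinear_eq_0_if_diagonal_eq_0[of l2 B])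
    fix u y z :: "'a vec" and c assume h: "u \<in> l2" "y \<in> l2" "z \<in> l2"
    have Tl: "T y \<in> l2" "T z \<in> l2" "T u \<in> l2" using bounded_op_in_l2[OF bT] h by auto
    show "B u (\<lambda>i. c * y i + z i) = c * B u y + B u z"
      unfolding B_def bounded_op_lincomb[OF bT h(2,3)] l2inner_lincomb_right[OF h(1) Tl(1,2)]
        l2inner_lincomb_right[OF Tl(3) h(2,3)]
      by (simp add: algebra_simps)
    show "B (\<lambda>i. c * y i + z i) u = cnj c * B y u + B z u"
      unfolding B_def bounded_op_lincomb[OF bT h(2,3)] l2inner_lincomb_left[OF Tl(3) h(2,3)]
        l2inner_lincomb_left[OF h(1) Tl(1,2)]
      by (simp add: algebra_simps)
  next
    fix y :: "'a vec" assume y: "y \<in> l2"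
    have "Im (l2inner y (T y)) = 0" using positive_opD[OF T y] by blast
    then have "cnj (l2inner y (T y)) = l2inner y (T y)" by (simp add: complex_eq_iff)
    then show "B y y = 0" unfolding B_def by (metis l2inner_commute right_minus_eq)
  qed (use w x l2_lincomb in auto)
  then show ?thesis unfolding B_def by simp
qed

lemma effect_positive: "effect a \<Longrightarrow> positive_op a"
  unfolding effect_def by blast

lemma effect_bounded: "effect a \<Longrightarrow> bounded_op a"
  unfolding effect_def positive_op_def by blast

lemma effect_quadratic_le:
  assumes a: "effect a" and x: "x \<in> l2"
  shows "Re (l2inner x (a x)) \<le> (l2norm x)\<^sup>2"
proof -
  have p: "positive_op (\<lambda>x i. id_op x i - a x i)" using a unfolding effect_def by blast
  have ax: "a x \<in> l2" using bounded_op_in_l2[OF effect_bounded[OF a] x] .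
  have eq: "(\<lambda>i. id_op x i - a x i) = (\<lambda>i. (-1) * a x i + x i)" using x by (simp add: id_op_def)
  have "0 \<le> Re (l2inner x (\<lambda>i. id_op x i - a x i))" using positive_opD[OF p x] by simp
  also have "l2inner x (\<lambda>i. id_op x i - a x i) = - l2inner x (a x) + l2inner x x"
    unfolding eq l2inner_lincomb_right[OF x ax x] by simp
  finally show ?thesis by (simp add: l2inner_self)
qed

lemma effect_scale:
  assumes a: "effect a" and r: "0 \<le> r" "r \<le> 1"
  shows "effect (\<lambda>x i. of_real r * a x i)"
proof -
  have ba: "bounded_op a" using effect_bounded[OF a] .
  have b1: "bounded_op (\<lambda>x i. of_real r * a x i)" by (rule bounded_op_scale_op[OF ba])
  have b2: "bounded_op (\<lambda>x i. id_op x i - of_real r * a x i)"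
    using bounded_op_diff_op[OF bounded_op_id_op b1] by simp
  show ?thesis unfolding effect_def positive_op_def
  proof (intro conjI ballI b1 b2)
    fix x :: "'a vec" assume x: "x \<in> l2"
    have pos: "Im (l2inner x (a x)) = 0 \<and> 0 \<le> Re (l2inner x (a x))"
      using positive_opD[OF effect_positive[OF a] x] .
    then show "Im (l2inner x (\<lambda>i. of_real r * a x i)) = 0"
      "0 \<le> Re (l2inner x (\<lambda>i. of_real r * a x i))"
      using r by (auto simp: l2inner_scale_right)
    have ax: "a x \<in> l2" using bounded_op_in_l2[OF ba x] .
    have le: "Re (l2inner x (a x)) \<le> (l2norm x)\<^sup>2" using effect_quadratic_le[OF a x] .
    have eq: "(\<lambda>i. id_op x i - of_real r * a x i) = (\<lambda>i. (- of_real r) * a x i + x i)"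
      using x by (simp add: id_op_def)
    have v: "l2inner x (\<lambda>i. id_op x i - of_real r * a x i)
        = - of_real r * l2inner x (a x) + of_real ((l2norm x)\<^sup>2)"
      unfolding eq l2inner_lincomb_right[OF x ax x] l2inner_self ..
    have "r * Re (l2inner x (a x)) \<le> Re (l2inner x (a x))"
      using pos r by (simp add: mult_left_le_one_le)
    then show "Im (l2inner x (\<lambda>i. id_op x i - of_real r * a x i)) = 0"
      "0 \<le> Re (l2inner x (\<lambda>i. id_op x i - of_real r * a x i))"
      unfolding v using pos le by auto
  qed
qed

lemma effect_id_op: "effect id_op"
  unfolding effect_def positive_op_def
proof (intro conjI ballI bounded_op_id_op)
  show "bounded_op (\<lambda>x i. id_op x i - id_op x i)"
    using bounded_op_diff_op[OF bounded_op_id_op bounded_op_id_op] .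
next
  fix x :: "'a vec" assume x: "x \<in> l2"
  show "Im (l2inner x (id_op x)) = 0" "0 \<le> Re (l2inner x (id_op x))"
    using x by (auto simp: id_op_def l2inner_self)
  show "Im (l2inner x (\<lambda>i. id_op x i - id_op x i)) = 0"
    "0 \<le> Re (l2inner x (\<lambda>i. id_op x i - id_op x i))"
    by (auto simp: l2inner_def)
qed

lemma effect_scalar_iff: "effect (\<lambda>(x::'i vec) i. of_real r * id_op x i) \<longleftrightarrow> 0 \<le> r \<and> r \<le> 1"
proof
  assume eff: "effect (\<lambda>(x::'i vec) i. of_real r * id_op x i)"
  obtain j :: 'i where True by simp
  have "id_op (basis_vec j) = basis_vec j" by (simp add: id_op_def)
  moreover have "basis_vec j j = 1" by (simp add: basis_vec_def)
  moreover have "0 \<le> Re (l2inner (basis_vec j) (\<lambda>i. of_real r * id_op (basis_vec j) i))"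
    using positive_opD[OF effect_positive[OF eff] basis_vec_in_l2] by blast
  moreover have "positive_op (\<lambda>(x::'i vec) i. id_op x i - of_real r * id_op x i)"
    using eff unfolding effect_def by (rule conjunct2)
  from positive_opD[OF this basis_vec_in_l2]
  have "0 \<le> Re (l2inner (basis_vec j) (\<lambda>i. id_op (basis_vec j) i - of_real r * id_op (basis_vec j) i))"
    by blast
  ultimately show "0 \<le> r \<and> r \<le> 1" by simp
qed (use effect_scale[OF effect_id_op] in auto)

section \<open>States separate bounded operators\<close>

lemma finite_support_expansion:
  assumes "finite S" "\<And>i. i \<notin> S \<Longrightarrow> v i = 0"
  shows "v = (\<lambda>i. \<Sum>j\<in>S. v j * basis_vec j i)"
proof
  fix i
  have "(\<Sum>j\<in>S. v j * basis_vec j i) = (\<Sum>j\<in>S. if j = i then v j else 0)"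
    by (rule sum.cong) (auto simp: basis_vec_def)
  also have "\<dots> = v i" using assms by (auto simp: sum.delta)
  finally show "v i = (\<Sum>j\<in>S. v j * basis_vec j i)" by simp
qed

lemma bounded_op_apply_finite_support:
  assumes "bounded_op T" "finite S" "\<And>i. i \<notin> S \<Longrightarrow> v i = 0"
  shows "T v = (\<lambda>i. \<Sum>j\<in>S. v j * T (basis_vec j) i)"
  using bounded_op_sum[OF assms(1,2), of basis_vec v] finite_support_expansion[OF assms(2,3)]
  by simp

definition finitely_supported :: "'i vec \<Rightarrow> bool" where
  "finitely_supported v \<longleftrightarrow> finite {i. v i \<noteq> 0}"

lemma finitely_supported_in_l2: "finitely_supported v \<Longrightarrow> v \<in> l2"
  unfolding finitely_supported_def by (rule finite_support_in_l2) auto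

lemma finitely_supported_lincomb:
  assumes "finitely_supported u" "finitely_supported z"
  shows "finitely_supported (\<lambda>i. c * u i + z i)"
proof -
  have "{i. c * u i + z i \<noteq> 0} \<subseteq> {i. u i \<noteq> 0} \<union> {i. z i \<noteq> 0}" by auto
  then show ?thesis using assms unfolding finitely_supported_def by (auto intro: finite_subset)
qed

lemma finitely_supported_basis_vec: "finitely_supported (basis_vec j)"
  unfolding finitely_supported_def basis_vec_def by simp

definition rank_one :: "'i vec \<Rightarrow> 'i op" where
  "rank_one v = (\<lambda>x. if x \<in> l2 then (\<lambda>i. l2inner v x * v i) else zero_vec)"

lemma bounded_op_rank_one:
  assumes v: "v \<in> l2"
  shows "bounded_op (rank_one v)"
  unfolding bounded_op_def
proof (intro conjI ballI allI impI)
  fix x y :: "'a vec" and c assume x: "x \<in> l2" and y: "y \<in> l2"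
  show "rank_one v (\<lambda>i. c * x i + y i) = (\<lambda>i. c * rank_one v x i + rank_one v y i)"
    using l2_lincomb[OF x y] x y
    by (simp add: rank_one_def l2inner_lincomb_right[OF v x y]) (simp add: algebra_simps)
next
  show "\<exists>C. \<forall>x\<in>l2. l2norm (rank_one v x) \<le> C * l2norm x"
  proof (intro exI[of _ "l2norm v * l2norm v"] ballI)
    fix x :: "'a vec" assume x: "x \<in> l2"
    have "l2norm (rank_one v x) = cmod (l2inner v x) * l2norm v"
      using x by (simp add: rank_one_def l2norm_scale)
    also have "\<dots> \<le> (l2norm v * l2norm x) * l2norm v"
      by (rule mult_right_mono[OF l2_Cauchy_Schwarz[OF v x]]) simp
    finally show "l2norm (rank_one v x) \<le> l2norm v * l2norm v * l2norm x"
      by (simp add: algebra_simps)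
  qed
qed (auto simp: rank_one_def l2_scale v)

lemma state_rank_one:
  assumes S: "finite S" "\<And>i. i \<notin> S \<Longrightarrow> v i = 0" and unit: "l2inner v v = 1"
  shows "state (rank_one v)"
proof -
  have v: "v \<in> l2" using finite_support_in_l2[OF S] .
  have "of_real ((l2norm v)\<^sup>2) = (1::complex)" using unit by (simp only: l2inner_self)
  then have "(l2norm v)\<^sup>2 = 1" by (simp only: of_real_eq_1_iff)
  then have "l2norm v = 1" using l2norm_nonneg[of v] by (simp add: power2_eq_1_iff)
  have bounded: "bounded_op (rank_one v)" using bounded_op_rank_one[OF v] .
  have square: "z * cnj z = of_real ((cmod z)\<^sup>2)" for z
    by (rule complex_norm_square[symmetric])
  have "positive_op (rank_one v)" unfolding positive_op_def
  proof (intro conjI ballI bounded)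
    fix x :: "'a vec" assume x: "x \<in> l2"
    have "l2inner x (rank_one v x) = of_real ((cmod (l2inner v x))\<^sup>2)"
      using x by (simp add: rank_one_def l2inner_scale_right l2inner_commute[of x v] square)
    then show "Im (l2inner x (rank_one v x)) = 0" "0 \<le> Re (l2inner x (rank_one v x))" by simp_all
  qed
  moreover have "positive_op (\<lambda>x i. id_op x i - rank_one v x i)" unfolding positive_op_def
  proof (intro conjI ballI bounded_op_diff_op[OF bounded_op_id_op bounded])
    fix x :: "'a vec" assume x: "x \<in> l2"
    have "(\<lambda>i. id_op x i - rank_one v x i) = (\<lambda>i. (- l2inner v x) * v i + x i)"
      using x by (simp add: id_op_def rank_one_def)
    then have "l2inner x (\<lambda>i. id_op x i - rank_one v x i)
        = - (l2inner v x * cnj (l2inner v x)) + l2inner x x"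
      using l2inner_lincomb_right[OF x v x, of "- l2inner v x"] by (simp add: l2inner_commute[of x v])
    then have eq: "l2inner x (\<lambda>i. id_op x i - rank_one v x i)
        = of_real ((l2norm x)\<^sup>2 - (cmod (l2inner v x))\<^sup>2)"
      unfolding square l2inner_self by simp
    have "cmod (l2inner v x) \<le> l2norm x" using l2_Cauchy_Schwarz[OF v x] \<open>l2norm v = 1\<close> by simp
    then have "(cmod (l2inner v x))\<^sup>2 \<le> (l2norm x)\<^sup>2" by (simp add: power_mono)
    then show "Im (l2inner x (\<lambda>i. id_op x i - rank_one v x i)) = 0"
      "0 \<le> Re (l2inner x (\<lambda>i. id_op x i - rank_one v x i))" unfolding eq by simp_all
  qed
  moreover have diag: "l2inner (basis_vec j) (rank_one v (basis_vec j)) = cnj (v j) * v j" for j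
    by (simp add: rank_one_def)
  moreover have "(\<lambda>j. cnj (v j) * v j) summable_on UNIV"
    by (rule finite_nonzero_values_imp_summable_on, rule finite_subset[OF _ S(1)]) (use S(2) in auto)
  moreover have "trace_op (rank_one v) = 1"
    using unit unfolding trace_op_def diag by (simp add: l2inner_def)
  ultimately show ?thesis unfolding state_def effect_def by simp
qed

lemma trace_rank_one_comp:
  assumes S: "finite S" "\<And>i. i \<notin> S \<Longrightarrow> v i = 0" and T: "bounded_op T"
  shows "trace_op (rank_one v \<circ> T) = l2inner v (T v)"
proof -
  have "trace_op (rank_one v \<circ> T) = (\<Sum>\<^sub>\<infinity>j. l2inner v (T (basis_vec j)) * v j)"
    unfolding trace_op_def using bounded_op_in_l2[OF T basis_vec_in_l2] by (simp add: rank_one_def)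
  also have "\<dots> = (\<Sum>\<^sub>\<infinity>j\<in>S. l2inner v (T (basis_vec j)) * v j)"
    by (rule infsum_cong_neutral) (use S in auto)
  also have "\<dots> = (\<Sum>j\<in>S. \<Sum>i\<in>S. cnj (v i) * T (basis_vec j) i * v j)"
    using S by (simp add: l2inner_finite_support[OF S] sum_distrib_right)
  also have "\<dots> = (\<Sum>i\<in>S. cnj (v i) * (\<Sum>j\<in>S. v j * T (basis_vec j) i))"
    by (subst sum.swap) (simp add: sum_distrib_left mult_ac)
  also have "\<dots> = l2inner v (T v)"
    by (simp add: l2inner_finite_support[OF S] bounded_op_apply_finite_support[OF T S])
  finally show ?thesis .
qed

lemma quadratic_eq_if_traces_eq:
  assumes X: "bounded_op X" and Y: "bounded_op Y"
    and traces: "\<And>\<rho>. state \<rho> \<Longrightarrow> trace_op (\<rho> \<circ> X) = trace_op (\<rho> \<circ> Y)"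
    and v: "finitely_supported v"
  shows "l2inner v (X v) = l2inner v (Y v)"
proof (cases "l2norm v = 0")
  case True
  have "v \<in> l2" using finitely_supported_in_l2[OF v] .
  then have "v = (\<lambda>i. 0)" using norm_le_l2norm True by force
  then show ?thesis by (simp add: l2inner_def)
next
  case False
  define S where "S = {i. v i \<noteq> 0}"
  have S: "finite S" "\<And>i. i \<notin> S \<Longrightarrow> v i = 0"
    using v unfolding S_def finitely_supported_def by auto
  have vl: "v \<in> l2" using finite_support_in_l2[OF S] .
  define c :: complex where "c = of_real (1 / l2norm v)"
  have "c \<noteq> 0" using False by (simp add: c_def)
  define u where "u = (\<lambda>i. c * v i)"
  have uS: "\<And>i. i \<notin> S \<Longrightarrow> u i = 0" using S(2) by (simp add: u_def)
  have "l2inner u u = cnj c * c * of_real ((l2norm v)\<^sup>2)"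
    by (simp add: u_def l2inner_scale_left l2inner_scale_right l2inner_self)
  also have "\<dots> = 1" using False by (simp add: c_def power2_eq_square field_simps)
  finally have "state (rank_one u)" using state_rank_one[OF S(1) uS] by simp
  then have "l2inner u (X u) = l2inner u (Y u)"
    using traces trace_rank_one_comp[of S u, OF S(1) uS X] trace_rank_one_comp[of S u, OF S(1) uS Y]
    by simp
  then have "cnj c * (c * l2inner v (X v)) = cnj c * (c * l2inner v (Y v))"
    by (simp add: u_def bounded_op_scale[OF X vl] bounded_op_scale[OF Y vl]
        l2inner_scale_left l2inner_scale_right)
  then show ?thesis using \<open>c \<noteq> 0\<close> by simp
qed

lemma basis_vec_image_eq_if_traces_eq:
  assumes X: "bounded_op X" and Y: "bounded_op Y"
    and traces: "\<And>\<rho>. state \<rho> \<Longrightarrow> trace_op (\<rho> \<circ> X) = trace_op (\<rho> \<circ> Y)"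
  shows "X (basis_vec l) = Y (basis_vec l)"
proof
  fix k
  define B where "B = (\<lambda>u w. l2inner u (X w) - l2inner u (Y w))"
  have "B (basis_vec k) (basis_vec l) = 0"
  proof (rule sesquilinear_eq_0_if_diagonal_eq_0[of "Collect finitely_supported" B])
    fix u y z :: "'a vec" and c
    assume "u \<in> Collect finitely_supported" "y \<in> Collect finitely_supported"
      "z \<in> Collect finitely_supported"
    then have l: "u \<in> l2" "y \<in> l2" "z \<in> l2" by (auto intro: finitely_supported_in_l2)
    have Tl: "X y \<in> l2" "X z \<in> l2" "Y y \<in> l2" "Y z \<in> l2" "X u \<in> l2" "Y u \<in> l2"
      using bounded_op_in_l2[OF X] bounded_op_in_l2[OF Y] l by auto
    show "B u (\<lambda>i. c * y i + z i) = c * B u y + B u z"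
      unfolding B_def bounded_op_lincomb[OF X l(2,3)] bounded_op_lincomb[OF Y l(2,3)]
        l2inner_lincomb_right[OF l(1) Tl(1,2)] l2inner_lincomb_right[OF l(1) Tl(3,4)]
      by (simp add: algebra_simps)
    show "B (\<lambda>i. c * y i + z i) u = cnj c * B y u + B z u"
      unfolding B_def l2inner_lincomb_left[OF Tl(5) l(2,3)] l2inner_lincomb_left[OF Tl(6) l(2,3)]
      by (simp add: algebra_simps)
  qed (auto simp: B_def finitely_supported_basis_vec finitely_supported_lincomb
      quadratic_eq_if_traces_eq[OF X Y traces])
  then show "X (basis_vec l) k = Y (basis_vec l) k" unfolding B_def by simp
qed

lemma l2_tail_small:
  assumes x: "x \<in> l2" and "\<epsilon> > 0"
  obtains F where "finite F" "l2norm (\<lambda>i. if i \<in> F then 0 else x i) \<le> \<epsilon>"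
proof -
  have "((\<lambda>i. (cmod (x i))\<^sup>2) has_sum (\<Sum>\<^sub>\<infinity>i. (cmod (x i))\<^sup>2)) UNIV"
    using x unfolding mem_l2_iff by (rule has_sum_infsum)
  then obtain F where F: "finite F"
    "dist (\<Sum>i\<in>F. (cmod (x i))\<^sup>2) (\<Sum>\<^sub>\<infinity>i. (cmod (x i))\<^sup>2) \<le> \<epsilon>\<^sup>2"
    using has_sum_finite_approximation \<open>\<epsilon> > 0\<close> by (metis zero_less_power)
  define z where "z = (\<lambda>i. if i \<in> F then 0 else x i)"
  have "(\<lambda>i. (cmod (z i))\<^sup>2) summable_on UNIV"
    using x unfolding mem_l2_iff by (rule summable_on_comparison_test) (auto simp: z_def)
  moreover have "(\<lambda>i. if i \<in> F then (cmod (x i))\<^sup>2 else 0) summable_on UNIV"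
    using F(1) by (intro finite_nonzero_values_imp_summable_on) (auto intro: finite_subset)
  ultimately have "(\<Sum>\<^sub>\<infinity>i. (cmod (x i))\<^sup>2)
      = (\<Sum>\<^sub>\<infinity>i. (cmod (z i))\<^sup>2) + (\<Sum>\<^sub>\<infinity>i. if i \<in> F then (cmod (x i))\<^sup>2 else 0)"
    by (subst infsum_add[symmetric]) (auto simp: z_def intro: infsum_cong)
  also have "(\<Sum>\<^sub>\<infinity>i. if i \<in> F then (cmod (x i))\<^sup>2 else 0) = (\<Sum>i\<in>F. (cmod (x i))\<^sup>2)"
    using F(1) by (subst infsum_cong_neutral[where T = F]) auto
  finally have "(l2norm z)\<^sup>2 \<le> \<epsilon>\<^sup>2" using F(2) unfolding l2norm_square dist_real_def by simp
  then have "l2norm z \<le> \<epsilon>" using \<open>\<epsilon> > 0\<close> by (simp add: power2_le_iff_abs_le)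
  then show ?thesis using that F(1) unfolding z_def by blast
qed

lemma bounded_op_eq_0_if_eq_0_on_basis:
  assumes D: "bounded_op D" and basis: "\<And>j. D (basis_vec j) = (\<lambda>i. 0)" and x: "x \<in> l2"
  shows "D x k = 0"
proof -
  obtain C where C: "C \<ge> 0" "\<And>x. x \<in> l2 \<Longrightarrow> l2norm (D x) \<le> C * l2norm x"
    using bounded_opE[OF D] by blast
  have "cmod (D x k) \<le> \<epsilon>" if "\<epsilon> > 0" for \<epsilon>
  proof -
    have "\<epsilon> / (C + 1) > 0" using that C(1) by simp
    then obtain F where F: "finite F" "l2norm (\<lambda>i. if i \<in> F then 0 else x i) \<le> \<epsilon> / (C + 1)"
      using l2_tail_small[OF x] by blast
    define xF where "xF = (\<lambda>i. if i \<in> F then x i else 0)"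
    have xF: "\<And>i. i \<notin> F \<Longrightarrow> xF i = 0" "xF \<in> l2"
      using finite_support_in_l2[OF F(1)] by (auto simp: xF_def)
    define z where "z = (\<lambda>i. x i - xF i)"
    have "z = (\<lambda>i. if i \<in> F then 0 else x i)" by (auto simp: z_def xF_def)
    then have z: "z \<in> l2" "l2norm z \<le> \<epsilon> / (C + 1)"
      using l2_diff[OF x xF(2)] F(2) by (simp_all add: z_def)
    have "D xF = (\<lambda>i. 0)"
      using bounded_op_apply_finite_support[OF D F(1) xF(1)] basis by simp
    then have "D x k = D z k" using bounded_op_diff[OF D x xF(2)] by (simp add: z_def)
    also have "cmod \<dots> \<le> C * l2norm z"
      using norm_le_l2norm[OF bounded_op_in_l2[OF D z(1)]] C(2)[OF z(1)] by (rule order_trans)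
    also have "\<dots> \<le> (C + 1) * (\<epsilon> / (C + 1))"
      using z(2) C(1) l2norm_nonneg[of z] by (intro mult_mono) auto
    finally show ?thesis using C(1) by simp
  qed
  then show ?thesis using field_le_epsilon[of "cmod (D x k)" 0] by simp
qed

lemma bounded_op_eq_if_eq_on_basis:
  assumes X: "bounded_op X" and Y: "bounded_op Y"
    and basis: "\<And>j. X (basis_vec j) = Y (basis_vec j)"
  shows "X = Y"
proof
  fix x :: "'a vec"
  show "X x = Y x"
  proof (cases "x \<in> l2")
    case False
    then show ?thesis using bounded_op_outside_l2[OF X] bounded_op_outside_l2[OF Y] by simp
  next
    case True
    have "(\<lambda>x i. X x i - Y x i) x k = 0" for k
      using basis by (intro bounded_op_eq_0_if_eq_0_on_basis[OF bounded_op_diff_op[OF X Y] _ True]) simp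
    then show ?thesis by auto
  qed
qed

lemma bounded_op_eq_if_traces_eq:
  assumes "bounded_op X" "bounded_op Y"
    and "\<And>\<rho>. state \<rho> \<Longrightarrow> trace_op (\<rho> \<circ> X) = trace_op (\<rho> \<circ> Y)"
  shows "X = Y"
  using assms by (intro bounded_op_eq_if_eq_on_basis basis_vec_image_eq_if_traces_eq)

section \<open>Positive semidefinite matrices and their Cholesky decomposition\<close>

type_synonym 'i mat = "'i \<Rightarrow> 'i \<Rightarrow> complex"

definition sesq_form :: "'i mat \<Rightarrow> 'i set \<Rightarrow> 'i vec \<Rightarrow> 'i vec \<Rightarrow> complex" where
  "sesq_form M G x y = (\<Sum>j\<in>G. \<Sum>k\<in>G. cnj (x j) * M j k * y k)"

definition psd :: "'i mat \<Rightarrow> bool" where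
  "psd M \<longleftrightarrow> (\<forall>F x. finite F \<longrightarrow> Im (sesq_form M F x x) = 0 \<and> 0 \<le> Re (sesq_form M F x x))"

lemma psdD: "psd M \<Longrightarrow> finite F \<Longrightarrow> Im (sesq_form M F x x) = 0 \<and> 0 \<le> Re (sesq_form M F x x)"
  unfolding psd_def by blast

lemma psd_diagonal: assumes "psd M" shows "Im (M j j) = 0 \<and> 0 \<le> Re (M j j)"
  using psdD[OF assms, of "{j}" "\<lambda>_. 1"] by (simp add: sesq_form_def)

lemma psd_diagonal_real: assumes "psd M" shows "M j j = of_real (Re (M j j))"
  using psd_diagonal[OF assms, of j] by (simp add: complex_eq_iff)

lemma psd_hermitian: assumes "psd M" shows "M j k = cnj (M k j)"
proof (cases "j = k")
  case True then show ?thesis using psd_diagonal[OF assms, of j] by (simp add: complex_eq_iff)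
next
  case False
  have fin: "finite {j, k}" by simp
  have "Im (M j j) = 0" "Im (M k k) = 0" using psd_diagonal[OF assms] by auto
  moreover have "Im (sesq_form M {j, k} (\<lambda>_. 1) (\<lambda>_. 1)) = 0"
    by (rule conjunct1[OF psdD[OF assms fin]])
  moreover have "Im (sesq_form M {j, k} (\<lambda>i. if i = k then \<i> else 1) (\<lambda>i. if i = k then \<i> else 1)) = 0"
    by (rule conjunct1[OF psdD[OF assms fin]])
  ultimately have "Im (M j k) + Im (M k j) = 0" "Re (M j k) - Re (M k j) = 0"
    using False by (simp_all add: sesq_form_def algebra_simps)
  then show ?thesis by (simp add: complex_eq_iff)
qed

lemma psd_row_eq_0_if_diagonal_eq_0:
  assumes M: "psd M" and zero: "M j j = 0" shows "M j k = 0"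
proof (rule ccontr)
  assume nz: "M j k \<noteq> 0"
  then have "j \<noteq> k" using zero by auto
  define a where "a = M j k"
  have "(cmod a)\<^sup>2 > 0" using nz by (simp add: a_def)
  define s :: real where "s = (Re (M k k) + 1) / (2 * (cmod a)\<^sup>2)"
  define t where "t = - of_real s * a"
  have "0 \<le> Re (sesq_form M {j, k} (\<lambda>i. if i = j then t else 1) (\<lambda>i. if i = j then t else 1))"
    by (rule conjunct2[OF psdD[OF M]]) simp
  also have "sesq_form M {j, k} (\<lambda>i. if i = j then t else 1) (\<lambda>i. if i = j then t else 1)
      = cnj t * a + cnj a * t + M k k"
    using \<open>j \<noteq> k\<close> zero psd_hermitian[OF M, of k j] by (simp add: sesq_form_def a_def)
  also have "cnj t * a + cnj a * t = - of_real (2 * s) * (cnj a * a)"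
    by (simp add: t_def algebra_simps)
  also have "cnj a * a = of_real ((cmod a)\<^sup>2)"
    by (metis complex_norm_square mult.commute)
  finally have "2 * s * (cmod a)\<^sup>2 \<le> Re (M k k)" by simp
  moreover have "2 * s * (cmod a)\<^sup>2 = Re (M k k) + 1"
    using \<open>(cmod a)\<^sup>2 > 0\<close> by (simp add: s_def)
  ultimately show False by simp
qed

lemma sesq_form_restrict:
  assumes "finite G" "F \<subseteq> G"
  shows "sesq_form N F x x
    = sesq_form N G (\<lambda>j. if j \<in> F then x j else 0) (\<lambda>j. if j \<in> F then x j else 0)"
proof -
  let ?x = "\<lambda>j. if j \<in> F then x j else 0"
  have "sesq_form N G ?x ?x = (\<Sum>j\<in>F. \<Sum>k\<in>G. cnj (?x j) * N j k * ?x k)"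
    unfolding sesq_form_def using assms by (intro sum.mono_neutral_right) auto
  also have "\<dots> = (\<Sum>j\<in>F. \<Sum>k\<in>F. cnj (?x j) * N j k * ?x k)"
    using assms by (intro sum.cong[OF refl] sum.mono_neutral_right) auto
  also have "\<dots> = sesq_form N F x x" unfolding sesq_form_def by (intro sum.cong) auto
  finally show ?thesis by simp
qed

lemma sesq_form_diff_vec:
  "sesq_form M G (\<lambda>j. x j - c * d j) (\<lambda>j. x j - c * d j)
     = sesq_form M G x x - c * sesq_form M G x d - cnj c * sesq_form M G d x
       + cnj c * c * sesq_form M G d d"
proof -
  have "\<And>j k. cnj (x j - c * d j) * M j k * (x k - c * d k)
      = cnj (x j) * M j k * x k - c * (cnj (x j) * M j k * d k) - cnj c * (cnj (d j) * M j k * x k)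
        + cnj c * c * (cnj (d j) * M j k * d k)"
    by (simp add: algebra_simps)
  then show ?thesis unfolding sesq_form_def
    by (simp add: sum.distrib sum_subtractf sum_distrib_left)
qed

lemma sesq_form_diff_mat:
  "sesq_form (\<lambda>j k. M j k - N j k) G x y = sesq_form M G x y - sesq_form N G x y"
  unfolding sesq_form_def by (simp add: algebra_simps sum_subtractf)

lemma sesq_form_rank_one:
  "sesq_form (\<lambda>j k. v j * cnj (v k)) G y y
     = cnj (\<Sum>k\<in>G. cnj (v k) * y k) * (\<Sum>k\<in>G. cnj (v k) * y k)"
  unfolding sesq_form_def by (simp add: sum_product algebra_simps)

lemma sesq_form_basis_vec_right:
  "finite G \<Longrightarrow> p \<in> G \<Longrightarrow> sesq_form M G x (basis_vec p) = (\<Sum>j\<in>G. cnj (x j) * M j p)"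
  unfolding sesq_form_def basis_vec_def by (simp add: if_distrib cong: if_cong)

lemma sesq_form_basis_vec_left:
  "finite G \<Longrightarrow> p \<in> G \<Longrightarrow> sesq_form M G (basis_vec p) y = (\<Sum>k\<in>G. M p k * y k)"
  unfolding sesq_form_def basis_vec_def
  by (subst sum.swap) (simp add: if_distrib[of cnj] if_distrib[of "\<lambda>z. z * _"] cong: if_cong)

text \<open>Normalised so that subtracting its outer product from a psd matrix clears row and
  column p.\<close>

definition pivot_column :: "'i mat \<Rightarrow> 'i \<Rightarrow> 'i vec" where
  "pivot_column M p = (\<lambda>j. if 0 < Re (M p p) then M j p / of_real (sqrt (Re (M p p))) else 0)"

lemma sesq_form_pivot_elimination:
  assumes M: "psd M" and G: "finite G" "p \<in> G" and r: "M p p = of_real r" "r > 0"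
    and b: "b = (\<Sum>k\<in>G. M p k * y k)"
  defines "y' \<equiv> (\<lambda>j. y j - b / of_real r * basis_vec p j)"
  shows "sesq_form M G y' y' = sesq_form M G y y - cnj b * b / of_real r"
proof -
  have "sesq_form M G y (basis_vec p) = cnj b"
    unfolding sesq_form_basis_vec_right[OF G] b
    by (simp add: psd_hermitian[OF M, of _ p] mult.commute)
  moreover have "sesq_form M G (basis_vec p) y = b"
    unfolding sesq_form_basis_vec_left[OF G] b ..
  moreover have "sesq_form M G (basis_vec p) (basis_vec p) = of_real r"
    using sesq_form_basis_vec_left[OF G] r(1) G by (simp add: basis_vec_def if_distrib cong: if_cong)
  ultimately have "sesq_form M G y' y' = sesq_form M G y y - b / of_real r * cnj b
      - cnj (b / of_real r) * b + cnj (b / of_real r) * (b / of_real r) * of_real r"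
    unfolding y'_def by (simp only: sesq_form_diff_vec)
  also have "\<dots> = sesq_form M G y y - cnj b * b / of_real r"
    using r(2) by (simp add: field_simps)
  finally show ?thesis .
qed

lemma psd_Schur_complement:
  assumes M: "psd M"
  shows "psd (\<lambda>j k. M j k - pivot_column M p j * cnj (pivot_column M p k))"
proof (cases "0 < Re (M p p)")
  case False
  then show ?thesis using M by (simp add: pivot_column_def)
next
  case True
  define r where "r = Re (M p p)"
  have r: "M p p = of_real r" "r > 0" using True psd_diagonal_real[OF M] by (simp_all add: r_def)
  define v where "v = pivot_column M p"
  have v: "v j = M j p / of_real (sqrt r)" for j by (simp add: v_def pivot_column_def r_def True)
  show ?thesis unfolding psd_def v_def[symmetric]
  proof (intro allI impI)
    fix F :: "'a set" and x :: "'a vec" assume "finite F"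
    define G where "G = insert p F"
    have G: "finite G" "F \<subseteq> G" "p \<in> G" using \<open>finite F\<close> by (auto simp: G_def)
    define y where "y = (\<lambda>j. if j \<in> F then x j else 0)"
    define b where "b = (\<Sum>k\<in>G. M p k * y k)"
    have "(\<Sum>k\<in>G. cnj (v k) * y k) = b / of_real (sqrt r)"
      unfolding b_def v by (simp add: sum_divide_distrib psd_hermitian[OF M, of p] algebra_simps)
    then have "sesq_form (\<lambda>j k. v j * cnj (v k)) G y y = cnj b * b / (of_real (sqrt r) * of_real (sqrt r))"
      by (simp add: sesq_form_rank_one)
    also have "of_real (sqrt r) * of_real (sqrt r) = (of_real r :: complex)"
      using r(2) by (simp flip: of_real_mult)
    finally have "sesq_form (\<lambda>j k. M j k - v j * cnj (v k)) F x x
        = sesq_form M G (\<lambda>j. y j - b / of_real r * basis_vec p j) (\<lambda>j. y j - b / of_real r * basis_vec p j)"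
      unfolding sesq_form_restrict[OF G(1,2)] y_def[symmetric] sesq_form_diff_mat
        sesq_form_pivot_elimination[OF M G(1,3) r b_def] by simp
    then show "Im (sesq_form (\<lambda>j k. M j k - v j * cnj (v k)) F x x) = 0 \<and>
        0 \<le> Re (sesq_form (\<lambda>j k. M j k - v j * cnj (v k)) F x x)"
      using psdD[OF M G(1)] by simp
  qed
qed

primrec cholesky_residual :: "'i mat \<Rightarrow> (nat \<Rightarrow> 'i) \<Rightarrow> nat \<Rightarrow> 'i mat" where
  "cholesky_residual M piv 0 = M"
| "cholesky_residual M piv (Suc n) = (\<lambda>j k. cholesky_residual M piv n j k
     - pivot_column (cholesky_residual M piv n) (piv n) j
       * cnj (pivot_column (cholesky_residual M piv n) (piv n) k))"

definition cholesky_vec :: "'i mat \<Rightarrow> (nat \<Rightarrow> 'i) \<Rightarrow> nat \<Rightarrow> 'i vec" where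
  "cholesky_vec M piv n = pivot_column (cholesky_residual M piv n) (piv n)"

lemma psd_cholesky_residual: "psd M \<Longrightarrow> psd (cholesky_residual M piv n)"
  by (induction n) (simp_all add: psd_Schur_complement)

lemma cholesky_residual_decomposition:
  "M j k = cholesky_residual M piv n j k + (\<Sum>m<n. cholesky_vec M piv m j * cnj (cholesky_vec M piv m k))"
  by (induction n) (simp_all add: cholesky_vec_def)

lemma cholesky_residual_pivot_row:
  assumes M: "psd M" and "m < n"
  shows "cholesky_residual M piv n (piv m) k = 0"
  using assms(2)
proof (induction n arbitrary: k)
  case 0 then show ?case by simp
next
  case (Suc n)
  let ?R = "cholesky_residual M piv n" and ?p = "piv n"
  have R: "psd ?R" by (rule psd_cholesky_residual[OF M])
  show ?case
  proof (cases "m < n")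
    case True
    then show ?thesis using Suc.IH by (simp add: pivot_column_def)
  next
    case False
    then have "m = n" using Suc.prems by simp
    show ?thesis
    proof (cases "0 < Re (?R ?p ?p)")
      case True
      define r where "r = Re (?R ?p ?p)"
      have "?R ?p ?p = of_real r" unfolding r_def by (rule psd_diagonal_real[OF R])
      moreover have "cnj (?R k ?p) = ?R ?p k" using psd_hermitian[OF R, of ?p k] by simp
      moreover have "of_real (sqrt r) * of_real (sqrt r) = (of_real r :: complex)"
        using True by (simp add: r_def flip: of_real_mult)
      ultimately have "pivot_column ?R ?p ?p * cnj (pivot_column ?R ?p k) = ?R ?p k"
        using True by (simp add: pivot_column_def r_def[symmetric])
      then show ?thesis using \<open>m = n\<close> by simp
    next
      case False
      then have "?R ?p ?p = 0" using psd_diagonal[OF R, of ?p] by (simp add: complex_eq_iff)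
      then have "?R ?p k = 0" by (rule psd_row_eq_0_if_diagonal_eq_0[OF R])
      then show ?thesis using \<open>m = n\<close> False by (simp add: pivot_column_def)
    qed
  qed
qed

lemma cholesky_vec_sum_le_diagonal:
  assumes M: "psd M"
  shows "(\<Sum>m<n. (cmod (cholesky_vec M piv m j))\<^sup>2) \<le> Re (M j j)"
proof -
  have "Re (M j j) = Re (cholesky_residual M piv n j j) + (\<Sum>m<n. (cmod (cholesky_vec M piv m j))\<^sup>2)"
    using arg_cong[OF cholesky_residual_decomposition[of M j j piv n], of Re]
    by (simp add: complex_norm_square[symmetric] Re_sum)
  moreover have "0 \<le> Re (cholesky_residual M piv n j j)"
    using psd_diagonal[OF psd_cholesky_residual[OF M]] by blast
  ultimately show ?thesis by simp
qed

text \<open>Pivoting through every index with a nonzero diagonal entry, each row is exhausted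
  after finitely many steps, so the decomposition is a finite sum row by row.\<close>

lemma psd_cholesky_decomposition:
  fixes M :: "'i mat" and piv :: "nat \<Rightarrow> 'i"
  assumes M: "psd M" and pivots: "{j. M j j \<noteq> 0} \<subseteq> range piv"
  obtains N :: "'i \<Rightarrow> nat"
  where "\<And>j m. N j \<le> m \<Longrightarrow> cholesky_vec M piv m j = 0"
    and "\<And>j k. M j k = (\<Sum>m<N j. cholesky_vec M piv m j * cnj (cholesky_vec M piv m k))"
proof -
  have "\<exists>N. (\<forall>m\<ge>N. cholesky_vec M piv m j = 0)
      \<and> (\<forall>k. M j k = (\<Sum>m<N. cholesky_vec M piv m j * cnj (cholesky_vec M piv m k)))" for j
  proof (cases "M j j = 0")
    case True
    have "(cmod (cholesky_vec M piv m j))\<^sup>2 \<le> 0" for m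
    proof -
      have "(cmod (cholesky_vec M piv m j))\<^sup>2 \<le> (\<Sum>m'<Suc m. (cmod (cholesky_vec M piv m' j))\<^sup>2)"
        by (rule member_le_sum) auto
      also have "\<dots> \<le> 0"
        using cholesky_vec_sum_le_diagonal[OF M, where n = "Suc m" and piv = piv and j = j] True
        by simp
      finally show ?thesis .
    qed
    then show ?thesis using psd_row_eq_0_if_diagonal_eq_0[OF M True] by (intro exI[of _ 0]) auto
  next
    case False
    then obtain m1 where m1: "j = piv m1" using pivots by auto
    have row: "cholesky_residual M piv m j k = 0" if "m > m1" for m k
      unfolding m1 by (rule cholesky_residual_pivot_row[OF M that])
    show ?thesis
    proof (intro exI[of _ "Suc m1"] conjI allI impI)
      fix m assume "Suc m1 \<le> m" then show "cholesky_vec M piv m j = 0"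
        using row[of m] by (simp add: cholesky_vec_def pivot_column_def)
    next
      fix k show "M j k = (\<Sum>m<Suc m1. cholesky_vec M piv m j * cnj (cholesky_vec M piv m k))"
        using cholesky_residual_decomposition[of M j k piv "Suc m1"] row[of "Suc m1" k] by simp
    qed
  qed
  then show ?thesis using that by metis
qed

section \<open>The trace of a state times an effect\<close>

lemma has_sum_sum:
  fixes f :: "'a \<Rightarrow> 'b \<Rightarrow> 'c::topological_comm_monoid_add"
  assumes "finite I" "\<And>i. i \<in> I \<Longrightarrow> (f i has_sum s i) A"
  shows "((\<lambda>x. \<Sum>i\<in>I. f i x) has_sum (\<Sum>i\<in>I. s i)) A"
  using assms by (induction I rule: finite_induct) (simp_all add: has_sum_add)

lemma psd_matrix_positive_op:
  assumes T: "positive_op T"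
  shows "psd (\<lambda>j k. T (basis_vec k) j)"
  unfolding psd_def
proof (intro allI impI)
  fix F :: "'a set" and x :: "'a vec" assume F: "finite F"
  define xF where "xF = (\<lambda>i. if i \<in> F then x i else 0)"
  have xF: "\<And>i. i \<notin> F \<Longrightarrow> xF i = 0" by (simp add: xF_def)
  have Tx: "T xF = (\<lambda>i. \<Sum>k\<in>F. xF k * T (basis_vec k) i)"
    by (rule bounded_op_apply_finite_support[OF positive_op_bounded[OF T] F xF])
  have "l2inner xF (T xF) = (\<Sum>j\<in>F. cnj (xF j) * T xF j)" by (rule l2inner_finite_support[OF F xF])
  also have "\<dots> = sesq_form (\<lambda>j k. T (basis_vec k) j) F x x"
    unfolding Tx sesq_form_def
    by (intro sum.cong refl) (simp add: xF_def sum_distrib_left algebra_simps)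
  finally show "Im (sesq_form (\<lambda>j k. T (basis_vec k) j) F x x) = 0 \<and>
      0 \<le> Re (sesq_form (\<lambda>j k. T (basis_vec k) j) F x x)"
    using positive_opD[OF T finite_support_in_l2[of F xF, OF F xF]] by simp
qed

text \<open>T = \<Sum>_m v_m v_m^*, written entrywise; row j involves only the first N j vectors.\<close>

definition gram_decomposition :: "'i op \<Rightarrow> (nat \<Rightarrow> 'i vec) \<Rightarrow> ('i \<Rightarrow> nat) \<Rightarrow> bool" where
  "gram_decomposition T v N \<longleftrightarrow> (\<forall>m. v m \<in> l2) \<and> (\<lambda>m. (l2norm (v m))\<^sup>2) summable_on UNIV \<and>
     (\<forall>j m. N j \<le> m \<longrightarrow> v m j = 0) \<and>
     (\<forall>j k. T (basis_vec k) j = (\<Sum>m<N j. v m j * cnj (v m k)))"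

lemma l2norm_square_summable_if_dominated:
  fixes v :: "nat \<Rightarrow> 'i vec"
  assumes d: "d summable_on UNIV" and dominated: "\<And>j n. (\<Sum>m<n. (cmod (v m j))\<^sup>2) \<le> d j"
  shows "\<And>m. v m \<in> l2" "(\<lambda>m. (l2norm (v m))\<^sup>2) summable_on UNIV"
    "(\<Sum>\<^sub>\<infinity>m. (l2norm (v m))\<^sup>2) \<le> (\<Sum>\<^sub>\<infinity>j. d j)"
proof -
  have partial_le: "(\<Sum>m\<in>F. (cmod (v m j))\<^sup>2) \<le> d j" if "finite F" for F j
  proof -
    have "(\<Sum>m\<in>F. (cmod (v m j))\<^sup>2) \<le> (\<Sum>m<Suc (Max (insert 0 F)). (cmod (v m j))\<^sup>2)"
      by (rule sum_mono2) (use that in \<open>auto simp: less_Suc_eq_le\<close>)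
    also have "\<dots> \<le> d j" by (rule dominated)
    finally show ?thesis .
  qed
  show l2: "v m \<in> l2" for m
    unfolding mem_l2_iff using partial_le[of "{m}"]
    by (intro summable_on_comparison_test[OF d]) auto
  have finite_le: "(\<Sum>m\<in>F. (l2norm (v m))\<^sup>2) \<le> (\<Sum>\<^sub>\<infinity>j. d j)" if F: "finite F" for F
  proof -
    have hs: "((\<lambda>j. \<Sum>m\<in>F. (cmod (v m j))\<^sup>2) has_sum (\<Sum>m\<in>F. (l2norm (v m))\<^sup>2)) UNIV"
      using l2 by (intro has_sum_sum[OF F]) (auto simp: l2norm_square mem_l2_iff intro: has_sum_infsum)
    then have "(\<Sum>m\<in>F. (l2norm (v m))\<^sup>2) = (\<Sum>\<^sub>\<infinity>j. \<Sum>m\<in>F. (cmod (v m j))\<^sup>2)"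
      by (simp add: infsumI)
    also have "\<dots> \<le> (\<Sum>\<^sub>\<infinity>j. d j)"
      using partial_le[OF F] hs d by (intro infsum_mono) (auto dest: has_sum_imp_summable)
    finally show ?thesis .
  qed
  show summable: "(\<lambda>m. (l2norm (v m))\<^sup>2) summable_on UNIV"
    by (rule nonneg_bdd_above_summable_on) (use finite_le in \<open>auto intro!: bdd_aboveI\<close>)
  show "(\<Sum>\<^sub>\<infinity>m. (l2norm (v m))\<^sup>2) \<le> (\<Sum>\<^sub>\<infinity>j. d j)"
    by (rule infsum_le_finite_sums[OF summable]) (use finite_le in auto)
qed

lemma state_gram_decomposition:
  assumes \<alpha>: "state \<alpha>"
  obtains v N where "gram_decomposition \<alpha> v N" "(\<Sum>\<^sub>\<infinity>m. (l2norm (v m))\<^sup>2) \<le> 1"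
proof -
  define R where "R = (\<lambda>j k. \<alpha> (basis_vec k) j)"
  have R: "psd R"
    using \<alpha> unfolding R_def state_def effect_def by (intro psd_matrix_positive_op) simp
  have diagonal: "(\<lambda>j. R j j) summable_on UNIV" "(\<Sum>\<^sub>\<infinity>j. R j j) = 1"
    using \<alpha> unfolding state_def R_def trace_op_def by simp_all
  have "countable {j. R j j \<noteq> 0}" using summable_countable_complex[OF diagonal(1)] by simp
  then obtain piv :: "nat \<Rightarrow> 'a" where pivots: "{j. R j j \<noteq> 0} \<subseteq> range piv"
    using subset_range_from_nat_into by blast
  define v where "v = cholesky_vec R piv"
  obtain N where N: "\<And>j m. N j \<le> m \<Longrightarrow> v m j = 0"
    "\<And>j k. R j k = (\<Sum>m<N j. v m j * cnj (v m k))"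
    using psd_cholesky_decomposition[OF R pivots] unfolding v_def by metis
  have "(\<lambda>j. Re (R j j)) summable_on UNIV" using summable_on_Re[OF diagonal(1)] .
  moreover have "(\<Sum>\<^sub>\<infinity>j. Re (R j j)) = 1" using infsum_Re[OF diagonal(1)] diagonal(2) by simp
  moreover have "(\<Sum>m<n. (cmod (v m j))\<^sup>2) \<le> Re (R j j)" for j n
    unfolding v_def by (rule cholesky_vec_sum_le_diagonal[OF R])
  ultimately have "\<And>m. v m \<in> l2" "(\<lambda>m. (l2norm (v m))\<^sup>2) summable_on UNIV"
      "(\<Sum>\<^sub>\<infinity>m. (l2norm (v m))\<^sup>2) \<le> 1"
    using l2norm_square_summable_if_dominated[of "\<lambda>j. Re (R j j)" v] by auto
  with N show ?thesis using that[of v N] unfolding gram_decomposition_def R_def by blast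
qed

lemma gram_decomposition_apply:
  assumes T: "positive_op T" and gram: "gram_decomposition T v N" and y: "y \<in> l2"
  shows "T y j = (\<Sum>m<N j. v m j * l2inner (v m) y)"
proof -
  have v: "v m \<in> l2" for m using gram unfolding gram_decomposition_def by blast
  have "T y j = l2inner (T (basis_vec j)) y"
    using positive_op_selfadjoint[OF T basis_vec_in_l2 y] by simp
  also have "\<dots> = (\<Sum>\<^sub>\<infinity>k. \<Sum>m<N j. v m j * (cnj (v m k) * y k))"
    unfolding l2inner_def
  proof (intro infsum_cong)
    fix k
    have "cnj (T (basis_vec j) k) = T (basis_vec k) j"
      using psd_hermitian[OF psd_matrix_positive_op[OF T], of j k] by simp
    also have "\<dots> = (\<Sum>m<N j. v m j * cnj (v m k))"
      using gram unfolding gram_decomposition_def by blast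
    finally show "cnj (T (basis_vec j) k) * y k = (\<Sum>m<N j. v m j * (cnj (v m k) * y k))"
      by (simp add: sum_distrib_right mult.assoc)
  qed
  also have "\<dots> = (\<Sum>m<N j. v m j * l2inner (v m) y)"
    unfolding l2inner_def
    by (intro infsumI has_sum_sum has_sum_cmult_right has_sum_infsum l2inner_summable[OF v y]) simp
  finally show ?thesis .
qed

lemma gram_decomposition_double_summable:
  assumes a: "bounded_op a" and gram: "gram_decomposition T v N"
  shows "(\<lambda>(m, j). v m j * cnj (a (v m) j)) summable_on UNIV \<times> UNIV"
proof -
  have v: "v m \<in> l2" for m
    using gram unfolding gram_decomposition_def by blast
  have summable: "(\<lambda>m. (l2norm (v m))\<^sup>2) summable_on UNIV"
    using gram unfolding gram_decomposition_def by blast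
  have av: "a (v m) \<in> l2" for m by (rule bounded_op_in_l2[OF a v])
  obtain C where C: "\<And>x. x \<in> l2 \<Longrightarrow> l2norm (a x) \<le> C * l2norm x"
    using bounded_opE[OF a] by blast
  define g where "g m = (\<Sum>\<^sub>\<infinity>j. cmod (v m j) * cmod (a (v m) j))" for m
  have "g m \<le> C * (l2norm (v m))\<^sup>2" for m
  proof -
    have "g m \<le> l2norm (v m) * l2norm (a (v m))"
      unfolding g_def by (rule infsum_norm_mult_le_l2norm[OF v av])
    also have "\<dots> \<le> l2norm (v m) * (C * l2norm (v m))"
      by (rule mult_left_mono[OF C[OF v] l2norm_nonneg])
    finally show ?thesis by (simp add: power2_eq_square mult_ac)
  qed
  moreover have "0 \<le> g m" for m unfolding g_def by (rule infsum_nonneg) simp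
  ultimately have "g summable_on UNIV"
    by (intro summable_on_comparison_test[OF summable_on_cmult_right[OF summable, of C]])
  then have "(\<lambda>(m, j). cmod (v m j) * cmod (a (v m) j)) summable_on UNIV \<times> UNIV"
    by (intro summable_on_SigmaI[where g = g]) (simp_all add: g_def has_sum_infsum l2inner_abs_summable[OF v av])
  then have "(\<lambda>p. norm ((\<lambda>(m, j). v m j * cnj (a (v m) j)) p)) summable_on UNIV \<times> UNIV"
    by (simp add: norm_mult case_prod_unfold)
  then show ?thesis using summable_on_iff_abs_summable_on_complex by blast
qed

lemma trace_comp_gram_decomposition:
  assumes T: "positive_op T" and a: "positive_op a" and gram: "gram_decomposition T v N"
  shows "trace_op (T \<circ> a) = (\<Sum>\<^sub>\<infinity>m. l2inner (a (v m)) (v m))"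
proof -
  have v: "v m \<in> l2" for m
    using gram unfolding gram_decomposition_def by blast
  have diagonal: "T (a (basis_vec j)) j = (\<Sum>\<^sub>\<infinity>m. v m j * cnj (a (v m) j))" for j
  proof -
    have "T (a (basis_vec j)) j = (\<Sum>m<N j. v m j * l2inner (v m) (a (basis_vec j)))"
      by (rule gram_decomposition_apply[OF T gram
            bounded_op_in_l2[OF positive_op_bounded[OF a] basis_vec_in_l2]])
    also have "\<dots> = (\<Sum>m<N j. v m j * cnj (a (v m) j))"
      using positive_op_selfadjoint[OF a v basis_vec_in_l2] by simp
    also have "\<dots> = (\<Sum>\<^sub>\<infinity>m. v m j * cnj (a (v m) j))"
      using gram unfolding gram_decomposition_def
      by (subst infsum_cong_neutral[where T = "{..<N j}"]) auto
    finally show ?thesis .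
  qed
  have "trace_op (T \<circ> a) = (\<Sum>\<^sub>\<infinity>j. \<Sum>\<^sub>\<infinity>m. v m j * cnj (a (v m) j))"
    unfolding trace_op_def using diagonal by simp
  also have "\<dots> = (\<Sum>\<^sub>\<infinity>m. \<Sum>\<^sub>\<infinity>j. v m j * cnj (a (v m) j))"
    using infsum_swap_banach[OF gram_decomposition_double_summable[OF positive_op_bounded[OF a] gram]]
    by simp
  also have "\<dots> = (\<Sum>\<^sub>\<infinity>m. l2inner (a (v m)) (v m))"
    unfolding l2inner_def by (simp add: mult.commute)
  finally show ?thesis .
qed

lemma trace_state_comp_effect:
  assumes \<alpha>: "state \<alpha>" and a: "effect a"
  obtains r where "trace_op (\<alpha> \<circ> a) = of_real r" "0 \<le> r" "r \<le> 1"
proof -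
  obtain v N where gram: "gram_decomposition \<alpha> v N" and norms: "(\<Sum>\<^sub>\<infinity>m. (l2norm (v m))\<^sup>2) \<le> 1"
    using state_gram_decomposition[OF \<alpha>] by blast
  have v: "v m \<in> l2" for m
    using gram unfolding gram_decomposition_def by blast
  have summable: "(\<lambda>m. (l2norm (v m))\<^sup>2) summable_on UNIV"
    using gram unfolding gram_decomposition_def by blast
  define r where "r m = Re (l2inner (v m) (a (v m)))" for m
  have r: "0 \<le> r m" "r m \<le> (l2norm (v m))\<^sup>2" for m
    using positive_opD[OF effect_positive[OF a] v] effect_quadratic_le[OF a v] by (simp_all add: r_def)
  have "l2inner (a (v m)) (v m) = of_real (r m)" for m
    using positive_opD[OF effect_positive[OF a] v[of m]]
    by (simp add: l2inner_commute[of "a (v m)"] r_def complex_eq_iff)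
  then have "trace_op (\<alpha> \<circ> a) = of_real (\<Sum>\<^sub>\<infinity>m. r m)"
    using trace_comp_gram_decomposition[OF _ effect_positive[OF a] gram] \<alpha>
    by (simp add: state_def effect_def infsum_of_real)
  moreover have "0 \<le> (\<Sum>\<^sub>\<infinity>m. r m)" using r(1) by (simp add: infsum_nonneg)
  moreover have "(\<Sum>\<^sub>\<infinity>m. r m) \<le> (\<Sum>\<^sub>\<infinity>m. (l2norm (v m))\<^sup>2)"
    using r summable by (intro infsum_mono summable_on_comparison_test[OF summable]) auto
  ultimately show ?thesis using that norms by simp
qed

section \<open>The dual of the Holevo instrument\<close>

lemma state_bounded: "state \<rho> \<Longrightarrow> bounded_op \<rho>"
  unfolding state_def effect_def positive_op_def by blast

lemma trace_comp_scale:
  assumes \<rho>: "bounded_op \<rho>" and T: "bounded_op T"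
  shows "trace_op (\<rho> \<circ> (\<lambda>x i. c * T x i)) = c * trace_op (\<rho> \<circ> T)"
  unfolding trace_op_def
  using bounded_op_scale[OF \<rho> bounded_op_in_l2[OF T basis_vec_in_l2]]
  by (simp add: infsum_cmult_right')

lemma trace_comp_id_op: "trace_op (\<rho> \<circ> id_op) = trace_op \<rho>"
  by (simp add: trace_op_def id_op_def)

lemma trace_holevo_comp:
  "trace_op (holevo \<alpha> A \<Delta> \<rho> \<circ> a) = trace_op (\<rho> \<circ> A \<Delta>) * trace_op (\<alpha> \<circ> a)"
  unfolding trace_op_def holevo_def by (simp add: infsum_cmult_right')

lemma dual_inst_holevo:
  assumes A: "bounded_op (A \<Delta>)"
  shows "dual_inst (holevo \<alpha> A) \<Delta> a = (\<lambda>x i. trace_op (\<alpha> \<circ> a) * A \<Delta> x i)"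
  unfolding dual_inst_def
proof (rule the_equality)
  let ?X = "\<lambda>x i. trace_op (\<alpha> \<circ> a) * A \<Delta> x i"
  have traces: "trace_op (\<rho> \<circ> ?X) = trace_op (holevo \<alpha> A \<Delta> \<rho> \<circ> a)" if "state \<rho>" for \<rho>
    by (simp add: trace_comp_scale[OF state_bounded[OF that] A] trace_holevo_comp)
  then show "bounded_op ?X \<and> (\<forall>\<rho>. state \<rho> \<longrightarrow> trace_op (\<rho> \<circ> ?X) = trace_op (holevo \<alpha> A \<Delta> \<rho> \<circ> a))"
    using bounded_op_scale_op[OF A] by blast
  fix X assume "bounded_op X \<and> (\<forall>\<rho>. state \<rho> \<longrightarrow> trace_op (\<rho> \<circ> X) = trace_op (holevo \<alpha> A \<Delta> \<rho> \<circ> a))"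
  then show "X = ?X"
    using traces by (intro bounded_op_eq_if_traces_eq bounded_op_scale_op[OF A]) auto
qed

lemma subobs_bounded: "subobs M A \<Longrightarrow> bounded_op (A \<Delta>)"
  unfolding subobs_def using effect_bounded bounded_op_zero_op by metis

definition sob_scale :: "real \<Rightarrow> ('w set \<Rightarrow> 'i op) \<Rightarrow> ('w set \<Rightarrow> 'i op)" where
  "sob_scale r A = (\<lambda>\<Delta> x i. of_real r * A \<Delta> x i)"

lemma U_inst_holevo:
  assumes \<alpha>: "state \<alpha>" and A: "subobs M A"
  shows "U_inst (holevo \<alpha> A) = {sob_scale r A | r. 0 \<le> r \<and> r \<le> 1}"
proof -
  have dual: "(\<lambda>\<Delta>. dual_inst (holevo \<alpha> A) \<Delta> a) = (\<lambda>\<Delta> x i. trace_op (\<alpha> \<circ> a) * A \<Delta> x i)" for a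
    by (rule ext, rule dual_inst_holevo[OF subobs_bounded[OF A]])
  have "trace_op (\<alpha> \<circ> (\<lambda>x i. of_real r * id_op x i)) = of_real r" for r
    using \<alpha> by (simp add: trace_comp_scale[OF state_bounded[OF \<alpha>] bounded_op_id_op]
        trace_comp_id_op state_def)
  then have "sob_scale r A \<in> U_inst (holevo \<alpha> A)" if "0 \<le> r" "r \<le> 1" for r
    using effect_scalar_iff[of r] that unfolding U_inst_def dual sob_scale_def
    by (intro CollectI exI[of _ "\<lambda>x i. of_real r * id_op x i"]) auto
  moreover have "\<exists>r. 0 \<le> r \<and> r \<le> 1 \<and> B = sob_scale r A" if B: "B \<in> U_inst (holevo \<alpha> A)" for B
  proof -
    obtain a where "effect a" "B = (\<lambda>\<Delta> x i. trace_op (\<alpha> \<circ> a) * A \<Delta> x i)"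
      using B[unfolded U_inst_def dual] by blast
    then show ?thesis using trace_state_comp_effect[OF \<alpha>] unfolding sob_scale_def by metis
  qed
  ultimately show ?thesis by blast
qed

section \<open>Scalar multiples of an observable\<close>

lemma subobs_sob_scale:
  assumes A: "subobs M A" and r: "0 \<le> r" "r \<le> 1"
  shows "subobs M (sob_scale r A)"
  unfolding subobs_def sob_scale_def
proof (intro conjI allI impI ballI)
  fix \<Delta> assume "\<Delta> \<notin> sets M"
  then show "(\<lambda>x i. of_real r * A \<Delta> x i) = zero_op"
    using A unfolding subobs_def by (simp add: zero_op_def zero_vec_def)
next
  fix \<Delta> assume "\<Delta> \<in> sets M"
  then show "effect (\<lambda>x i. of_real r * A \<Delta> x i)"
    using A effect_scale[OF _ r] unfolding subobs_def by blast
next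
  fix D :: "nat \<Rightarrow> 'a set" and x :: "'b vec"
  assume "range D \<subseteq> sets M" "disjoint_family D" "x \<in> l2"
  then have "(\<lambda>N. r * l2norm (\<lambda>i. (\<Sum>n<N. A (D n) x i) - A (\<Union>n. D n) x i)) \<longlonglongrightarrow> 0"
    using A unfolding subobs_def by (auto intro: tendsto_mult_right_zero)
  moreover have "(\<lambda>i. (\<Sum>n<N. of_real r * A (D n) x i) - of_real r * A (\<Union>n. D n) x i)
      = (\<lambda>i. of_real r * ((\<Sum>n<N. A (D n) x i) - A (\<Union>n. D n) x i))" for N
    by (simp add: sum_distrib_left right_diff_distrib)
  ultimately show "(\<lambda>N. l2norm (\<lambda>i. (\<Sum>n<N. of_real r * A (D n) x i) - of_real r * A (\<Union>n. D n) x i))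
      \<longlonglongrightarrow> 0"
    using r by (simp add: l2norm_scale)
qed

lemma sob_effect_algebra_sob_scale:
  assumes A: "observable M A"
  shows "sob_effect_algebra M {sob_scale r A | r. 0 \<le> r \<and> r \<le> 1}" (is "sob_effect_algebra M ?U")
proof -
  have sub: "subobs M A" and space: "A (space M) = id_op"
    using A unfolding observable_def by auto
  have in_U: "sob_scale r A \<in> ?U" if "0 \<le> r" "r \<le> 1" for r
    using that by blast
  show ?thesis unfolding sob_effect_algebra_def
  proof (intro conjI)
    show "?U \<subseteq> {B. subobs M B}" using subobs_sob_scale[OF sub] by blast
    have "sob_scale 1 A = A" by (simp add: sob_scale_def)
    moreover have "sob_diff A (sob_scale r A) \<in> ?U" if "0 \<le> r" "r \<le> 1" for r
      using in_U[of "1 - r"] that by (simp add: sob_diff_def sob_scale_def algebra_simps)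
    ultimately show "\<exists>Z\<in>?U. observable M Z \<and> (\<forall>B\<in>?U. sob_diff Z B \<in> ?U)"
      using A in_U[of 1] by auto
  next
    have "sob_add (sob_scale r A) (sob_scale s A) \<in> ?U"
      if "subobs M (sob_add (sob_scale r A) (sob_scale s A))" for r s
    proof -
      have sum: "sob_add (sob_scale r A) (sob_scale s A) = sob_scale (r + s) A"
        by (simp add: sob_add_def sob_scale_def algebra_simps)
      then have "effect (sob_scale (r + s) A (space M))"
        using that sets.top unfolding subobs_def by metis
      then have "0 \<le> r + s \<and> r + s \<le> 1"
        unfolding sob_scale_def space effect_scalar_iff .
      then show ?thesis unfolding sum using in_U by blast
    qed
    then show "\<forall>B1\<in>?U. \<forall>B2\<in>?U. subobs M (sob_add B1 B2) \<longrightarrow> sob_add B1 B2 \<in> ?U"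
      by blast
  qed
qed

theorem theorem3p3:
  fixes \<alpha> :: "'i op" and A :: "'w set \<Rightarrow> 'i op" and M :: "'w measure"
  assumes "state \<alpha>" and "observable M A"
  shows "sob_effect_algebra M (U_inst (holevo \<alpha> A))"
proof -
  have "subobs M A" using assms(2) unfolding observable_def by blast
  then have "U_inst (holevo \<alpha> A) = {sob_scale r A | r. 0 \<le> r \<and> r \<le> 1}"
    by (rule U_inst_holevo[OF assms(1)])
  then show ?thesis using sob_effect_algebra_sob_scale[OF assms(2)] by simp
qed
end
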